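(* Let $(X,d)$ be a finite metric space and $k$ an integer with $2\le k\le|X|$. Let $\mathrm{OPT}\subseteq X$ be a fixed $k$-set maximizing $\mathrm{cl}(T)=\sum_{\{u,v\}\subseteq T}d(u,v)$ over $k$-subsets, let $\Delta=\mathrm{cl}(\mathrm{OPT})/\binom{k}{2}$, let $z_0\in\mathrm{OPT}$ be a point minimizing $\sum_{u\in\mathrm{OPT}}d(z_0,u)$ (the center of the minimum weight spanning star of $\mathrm{OPT}$), and let $B=B(z_0,2\Delta)$. Then $|X\setminus B|<k/2$. Moreover, for any ball $B(u,r)$ with $|X\setminus B(u,r)|<k/2$, we have $d(z_0,u)\le 2\Delta+r$.
   Context: $B(u,r)=\{v\in X: d(u,v)\le r\}$. *)

theory Defs
  imports Complex_Main
begin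

definition metric_on :: "'a set \<Rightarrow> ('a \<Rightarrow> 'a \<Rightarrow> real) \<Rightarrow> bool" where
  "metric_on X d \<longleftrightarrow>
     (\<forall>u\<in>X. \<forall>v\<in>X. 0 \<le> d u v) \<and>
     (\<forall>u\<in>X. \<forall>v\<in>X. d u v = 0 \<longleftrightarrow> u = v) \<and>
     (\<forall>u\<in>X. \<forall>v\<in>X. d u v = d v u) \<and>
     (\<forall>u\<in>X. \<forall>v\<in>X. \<forall>w\<in>X. d u w \<le> d u v + d v w)"

definition cl :: "('a \<Rightarrow> 'a \<Rightarrow> real) \<Rightarrow> 'a set \<Rightarrow> real" where
  "cl d T = (\<Sum>(u,v)\<in>{(u,v). u \<in> T \<and> v \<in> T \<and> u \<noteq> v}. d u v) / 2"

definition mball :: "'a set \<Rightarrow> ('a \<Rightarrow> 'a \<Rightarrow> real) \<Rightarrow> 'a \<Rightarrow> real \<Rightarrow> 'a set" where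
  "mball X d u r = {v \<in> X. d u v \<le> r}"

end

theory Submission
  imports Defs
begin

text \<open>Write S(z) for the weight of the star joining z to the points of OPT. The S(z) with
  z \<in> OPT add up to 2 cl(OPT) = k(k-1)\<Delta>, so the minimizer z0 has S(z0) \<le> (k-1)\<Delta>.
  For x outside OPT, exchanging x for any w \<in> OPT does not increase cl, i.e.
  S(x) - d(x,w) \<le> S(w); summing over w gives S(x) \<le> k\<Delta>, and averaging the triangle
  inequality d(z0,x) \<le> d(z0,u) + d(u,x) over u \<in> OPT gives d(z0,x) \<le> 2\<Delta>. Hence every
  point outside B lies in OPT and contributes more than 2\<Delta> to S(z0), so there are fewer
  than k/2 of them. Two balls each missing fewer than k/2 points meet in a point of OPT, and
  the triangle inequality through that point gives the second claim.\<close>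

lemma real_choose_two: "real (n choose 2) = real n * (real n - 1) / 2"
proof -
  have "even (n * (n - 1))" by auto
  then show ?thesis
    by (cases n) (simp_all add: choose_two real_of_nat_div algebra_simps)
qed

definition star_weight :: "('a \<Rightarrow> 'a \<Rightarrow> real) \<Rightarrow> 'a set \<Rightarrow> 'a \<Rightarrow> real" where
  "star_weight d T z = (\<Sum>u\<in>T. d z u)"

lemma cl_nonneg:
  assumes "metric_on X d" "T \<subseteq> X"
  shows "0 \<le> cl d T"
  using assms unfolding cl_def metric_on_def by (auto intro!: sum_nonneg) blast

lemma two_cl_eq_sum_star_weight:
  assumes "metric_on X d" "T \<subseteq> X" "finite T"
  shows "2 * cl d T = (\<Sum>z\<in>T. star_weight d T z)"
proof -
  have diag: "d u u = 0" if "u \<in> T" for u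
    using assms that unfolding metric_on_def by blast
  have "(\<Sum>(u,v)\<in>{(u,v). u \<in> T \<and> v \<in> T \<and> u \<noteq> v}. d u v) = (\<Sum>(u,v)\<in>T \<times> T. d u v)"
    by (rule sum.mono_neutral_left) (use assms(3) diag in auto)
  then show ?thesis
    unfolding cl_def star_weight_def by (simp add: sum.cartesian_product)
qed

lemma cl_insert:
  assumes "metric_on X d" "insert x T \<subseteq> X" "finite T" "x \<notin> T"
  shows "cl d (insert x T) = cl d T + star_weight d T x"
proof -
  note metric = assms(1)[unfolded metric_on_def]
  have "d x x = 0" and sym: "\<And>z. z \<in> T \<Longrightarrow> d z x = d x z"
    using metric assms(2) by blast+
  then have "(\<Sum>z\<in>insert x T. star_weight d (insert x T) z)
      = 2 * star_weight d T x + (\<Sum>z\<in>T. star_weight d T z)"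
    using assms(3,4) by (simp add: star_weight_def sum.distrib)
  with two_cl_eq_sum_star_weight[OF assms(1) _ assms(3)]
    two_cl_eq_sum_star_weight[OF assms(1,2)] assms(2,3) show ?thesis
    by simp
qed

lemma star_weight_exchange_le:
  assumes "metric_on X d" "finite T" "T \<subseteq> X" "x \<in> X - T" "w \<in> T"
    and "cl d (insert x (T - {w})) \<le> cl d T"
  shows "star_weight d T x - d x w \<le> star_weight d T w"
proof -
  have "d w w = 0" using assms(1,3,5) unfolding metric_on_def by blast
  then have "star_weight d (T - {w}) w = star_weight d T w"
    using assms(2,5) by (simp add: star_weight_def sum_diff1)
  moreover have "star_weight d (T - {w}) x = star_weight d T x - d x w"
    using assms(2,5) by (simp add: star_weight_def sum_diff1)
  moreover have "cl d T = cl d (T - {w}) + star_weight d (T - {w}) w"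
    using cl_insert[OF assms(1), of w "T - {w}"] assms(2,3,5) by (simp add: insert_absorb)
  moreover have "cl d (insert x (T - {w})) = cl d (T - {w}) + star_weight d (T - {w}) x"
    using cl_insert[OF assms(1), of x "T - {w}"] assms(2-4) by blast
  ultimately show ?thesis using assms(6) by simp
qed

lemma star_weight_outside_le_if_max_cl:
  assumes "metric_on X d" "finite X" "T \<subseteq> X" "x \<in> X - T"
    and "\<forall>T'. T' \<subseteq> X \<and> card T' = card T \<longrightarrow> cl d T' \<le> cl d T"
  shows "(real (card T) - 1) * star_weight d T x \<le> 2 * cl d T"
proof -
  have finite_T: "finite T" using assms(2,3) by (rule finite_subset[rotated])
  have "star_weight d T x - d x w \<le> star_weight d T w" if "w \<in> T" for w
  proof (rule star_weight_exchange_le[OF assms(1) finite_T assms(3,4) that])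
    have "card (insert x (T - {w})) = Suc (card (T - {w}))"
      using finite_T assms(4) by simp
    also have "\<dots> = card T"
      using card.remove[OF finite_T that] by (simp only:)
    finally have "card (insert x (T - {w})) = card T" .
    moreover have "insert x (T - {w}) \<subseteq> X"
      using assms(3,4) by blast
    ultimately show "cl d (insert x (T - {w})) \<le> cl d T"
      using assms(5) by blast
  qed
  then have "(\<Sum>w\<in>T. star_weight d T x - d x w) \<le> (\<Sum>w\<in>T. star_weight d T w)"
    by (rule sum_mono)
  then show ?thesis
    using two_cl_eq_sum_star_weight[OF assms(1,3) finite_T]
    by (simp add: sum_subtractf star_weight_def algebra_simps)
qed

lemma card_mult_star_weight_le_if_min:
  assumes "metric_on X d" "T \<subseteq> X" "finite T"
    and "\<forall>y\<in>T. star_weight d T z \<le> star_weight d T y"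
  shows "real (card T) * star_weight d T z \<le> 2 * cl d T"
  using sum_mono[of T "\<lambda>_. star_weight d T z" "star_weight d T"] assms
    two_cl_eq_sum_star_weight[OF assms(1-3)] by simp

lemma card_mult_dist_le_star_weights:
  assumes "metric_on X d" "T \<subseteq> X" "z \<in> X" "x \<in> X"
  shows "real (card T) * d z x \<le> star_weight d T z + star_weight d T x"
proof -
  have "d z x \<le> d z u + d x u" if "u \<in> T" for u
    using assms that unfolding metric_on_def by (metis subsetD)
  then have "(\<Sum>u\<in>T. d z x) \<le> (\<Sum>u\<in>T. d z u + d x u)"
    by (rule sum_mono)
  then show ?thesis by (simp add: star_weight_def sum.distrib)
qed

lemma card_mult_lt_star_weight:
  assumes "metric_on X d" "T \<subseteq> X" "finite T"
    and "F \<subseteq> T" "F \<noteq> {}" "\<forall>u\<in>F. s < d z u" "z \<in> X"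
  shows "real (card F) * s < star_weight d T z"
proof -
  have "finite F" using assms(3,4) by (rule finite_subset[rotated])
  then have "(\<Sum>u\<in>F. s) < (\<Sum>u\<in>F. d z u)"
    using assms(5,6) by (intro sum_strict_mono) auto
  also have "\<dots> \<le> star_weight d T z"
    unfolding star_weight_def using assms(1,2,3,4,7) unfolding metric_on_def
    by (intro sum_mono2) blast+
  finally show ?thesis by simp
qed

lemma Int_nonempty_if_small_complements:
  assumes "finite X" "A \<subseteq> X" "card (X - B) + card (X - C) < card A"
  shows "A \<inter> B \<inter> C \<noteq> {}"
proof
  assume "A \<inter> B \<inter> C = {}"
  then have "A \<subseteq> (X - B) \<union> (X - C)" using assms(2) by blast
  then have "card A \<le> card ((X - B) \<union> (X - C))" using assms(1) by (intro card_mono) auto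
  also have "\<dots> \<le> card (X - B) + card (X - C)" by (rule card_Un_le)
  finally show False using assms(3) by simp
qed

lemma dist_le_if_balls_contain_majority:
  assumes "finite X" "metric_on X d" "A \<subseteq> X" "u \<in> X" "z \<in> X"
    and "real (card (X - mball X d u r)) < real (card A) / 2"
    and "real (card (X - mball X d z s)) < real (card A) / 2"
  shows "d z u \<le> s + r"
proof -
  have "A \<inter> mball X d u r \<inter> mball X d z s \<noteq> {}"
    using assms(6,7) by (intro Int_nonempty_if_small_complements[OF assms(1,3)]) linarith
  then obtain w where "w \<in> X" "d u w \<le> r" "d z w \<le> s"
    unfolding mball_def by blast
  moreover have "d z u \<le> d z w + d w u" "d w u = d u w"
    using assms(2,4,5) \<open>w \<in> X\<close> unfolding metric_on_def by blast+
  ultimately show ?thesis by linarith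
qed

definition mean_pair_dist :: "('a \<Rightarrow> 'a \<Rightarrow> real) \<Rightarrow> 'a set \<Rightarrow> real" where
  "mean_pair_dist d T = cl d T / real (card T choose 2)"

locale max_cl_set =
  fixes X :: "'a set" and d :: "'a \<Rightarrow> 'a \<Rightarrow> real" and OPT :: "'a set" and z0 :: 'a
  assumes finite_X: "finite X" and metric: "metric_on X d"
    and OPT_subset: "OPT \<subseteq> X" and two_le_card_OPT: "2 \<le> card OPT"
    and OPT_max: "\<forall>T. T \<subseteq> X \<and> card T = card OPT \<longrightarrow> cl d T \<le> cl d OPT"
    and z0_in_OPT: "z0 \<in> OPT"
    and z0_min: "\<forall>z\<in>OPT. star_weight d OPT z0 \<le> star_weight d OPT z"
begin

abbreviation \<Delta> :: real where "\<Delta> \<equiv> mean_pair_dist d OPT"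

abbreviation k :: real where "k \<equiv> real (card OPT)"

lemma finite_OPT: "finite OPT"
  using finite_X OPT_subset by (rule finite_subset[rotated])

lemma two_le_k: "2 \<le> k"
  using two_le_card_OPT by simp

lemma two_cl_OPT: "2 * cl d OPT = k * (k - 1) * \<Delta>"
  using two_le_k by (simp add: mean_pair_dist_def real_choose_two field_simps)

lemma \<Delta>_nonneg: "0 \<le> \<Delta>"
  using cl_nonneg[OF metric OPT_subset] by (simp add: mean_pair_dist_def)

lemma star_weight_z0_le: "star_weight d OPT z0 \<le> (k - 1) * \<Delta>"
proof -
  have "k * star_weight d OPT z0 \<le> k * ((k - 1) * \<Delta>)"
    using card_mult_star_weight_le_if_min[OF metric OPT_subset finite_OPT z0_min] two_cl_OPT
    by simp
  then show ?thesis using two_le_k by simp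
qed

lemma star_weight_outside_le:
  assumes "x \<in> X - OPT"
  shows "star_weight d OPT x \<le> k * \<Delta>"
proof -
  have "(k - 1) * star_weight d OPT x \<le> (k - 1) * (k * \<Delta>)"
    using star_weight_outside_le_if_max_cl[OF metric finite_X OPT_subset assms OPT_max] two_cl_OPT
    by (simp add: algebra_simps)
  then show ?thesis using two_le_k by simp
qed

lemma dist_z0_outside_le:
  assumes "x \<in> X - OPT"
  shows "d z0 x \<le> 2 * \<Delta>"
proof -
  have "k * d z0 x \<le> star_weight d OPT z0 + star_weight d OPT x"
    using card_mult_dist_le_star_weights[OF metric OPT_subset] OPT_subset z0_in_OPT assms
    by auto
  also have "\<dots> \<le> k * (2 * \<Delta>)"
    using star_weight_z0_le star_weight_outside_le[OF assms] \<Delta>_nonneg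
    by (simp add: algebra_simps)
  finally show ?thesis using two_le_k by simp
qed

lemma card_outside_ball_z0_lt: "real (card (X - mball X d z0 (2 * \<Delta>))) < k / 2"
proof (rule ccontr)
  define F where "F = X - mball X d z0 (2 * \<Delta>)"
  have far_subset: "F \<subseteq> OPT"
    using dist_z0_outside_le unfolding F_def mball_def by force
  assume "\<not> ?thesis"
  then have k_le: "k \<le> 2 * real (card F)" by (simp add: F_def)
  then have "F \<noteq> {}" using two_le_k by auto
  then have "real (card F) * (2 * \<Delta>) < star_weight d OPT z0"
    by (rule card_mult_lt_star_weight[OF metric OPT_subset finite_OPT far_subset])
      (use OPT_subset z0_in_OPT in \<open>auto simp: F_def mball_def\<close>)
  moreover have "k * \<Delta> \<le> 2 * real (card F) * \<Delta>"
    using k_le \<Delta>_nonneg by (rule mult_right_mono)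
  ultimately show False using star_weight_z0_le \<Delta>_nonneg by (simp add: algebra_simps)
qed

end

theorem lemma11:
  fixes X :: "'a set" and d :: "'a \<Rightarrow> 'a \<Rightarrow> real" and k :: nat
    and OPT :: "'a set" and z0 :: 'a and \<Delta> :: real
  assumes "finite X" and "metric_on X d"
    and "2 \<le> k" and "k \<le> card X"
    and "OPT \<subseteq> X" and "card OPT = k"
    and "\<forall>T. T \<subseteq> X \<and> card T = k \<longrightarrow> cl d T \<le> cl d OPT"
    and "\<Delta> = cl d OPT / real (k choose 2)"
    and "z0 \<in> OPT"
    and "\<forall>z\<in>OPT. (\<Sum>u\<in>OPT. d z0 u) \<le> (\<Sum>u\<in>OPT. d z u)"
  shows "real (card (X - mball X d z0 (2 * \<Delta>))) < real k / 2 \<and>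
    (\<forall>u\<in>X. \<forall>r. real (card (X - mball X d u r)) < real k / 2 \<longrightarrow> d z0 u \<le> 2 * \<Delta> + r)"
proof -
  interpret max_cl_set X d OPT z0
    using assms by unfold_locales (simp_all add: star_weight_def)
  have \<Delta>: "\<Delta> = mean_pair_dist d OPT"
    using assms(6,8) by (simp add: mean_pair_dist_def)
  have far_few: "real (card (X - mball X d z0 (2 * \<Delta>))) < real k / 2"
    using card_outside_ball_z0_lt assms(6) \<Delta> by simp
  moreover have "d z0 u \<le> 2 * \<Delta> + r"
    if "u \<in> X" and "real (card (X - mball X d u r)) < real k / 2" for u r
    by (rule dist_le_if_balls_contain_majority[OF assms(1,2,5) that(1)])
      (use that(2) far_few assms(5,6,9) in auto)
  ultimately show ?thesis by blast
qed

end
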